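(* Let $l\ge 1$, let $1\le k\le l$ and let $S\subseteq\{1,\dots,l\}$. A key of length $l$ and index $k$ and a lock of length $l$ and index set $S$ can match (i.e. the key can be placed inside the lock, with its rectangle occupying the rectangular part of the lock's negative space, and the remaining uncovered part of the lock's negative space can be filled exactly by copies of the tooth) if and only if $k\in S$.
   Context: The tooth is the plus-shaped $9$-omino consisting of a central unit square and two unit squares extending in a straight line from it in each of the four directions. A key is a bump on an edge of a polyomino: a key of length $l$ and index $k$ is a $(6l-2)\times 1$ rectangle of unit squares, perpendicular to the edge, together with one copy of the tooth attached to the side of the rectangle at the $(6k-2)$-th square of the rectangle (counting from the square closest to the edge). A lock is a dent on an edge: the negative space of a lock of length $l$ and index set $S$ is a $(6l-2)\times 1$ rectangle perpendicular to the edge together with one tooth-shaped region attached (in the same manner as for a key) at the $(6x-2)$-th square (counting from the square closest to the edge) for every $x\in S$. *)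

theory Defs
  imports Main
begin

text \<open>Unit squares are cells of the integer grid, a cell being a pair (x, y) of integers.\<close>

type_synonym cell = "int \<times> int"

definition tooth_at :: "cell \<Rightarrow> cell set" where
  "tooth_at c = {(fst c + d, snd c) | d. \<bar>d\<bar> \<le> 2} \<union> {(fst c, snd c + d) | d. \<bar>d\<bar> \<le> 2}"

text \<open>Coordinates: the edge of the polyomino is the horizontal line below row 1; the
  (6l-2) x 1 rectangle is the column x = 0, rows 1..6l-2, and its j-th square
  (counting from the square closest to the edge) is (0, j).\<close>
definition rect :: "nat \<Rightarrow> cell set" where
  "rect l = {(0, j) | j. 1 \<le> j \<and> j \<le> 6 * int l - 2}"

text \<open>A tooth attached to the (left) side of the rectangle at its j-th square:
  the tip of one arm is the cell adjacent to (0, j), i.e. the centre is (-3, j).\<close>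
definition tooth_attached :: "int \<Rightarrow> cell set" where
  "tooth_attached j = tooth_at (-3, j)"

definition key :: "nat \<Rightarrow> nat \<Rightarrow> cell set" where
  "key l k = rect l \<union> tooth_attached (6 * int k - 2)"

definition lock_space :: "nat \<Rightarrow> nat set \<Rightarrow> cell set" where
  "lock_space l S = rect l \<union> (\<Union>x\<in>S. tooth_attached (6 * int x - 2))"

definition grid_iso :: "(cell \<Rightarrow> cell) \<Rightarrow> bool" where
  "grid_iso f \<longleftrightarrow> (\<exists>a b c d tx ty.
      (a, b, c, d) \<in> {(1,0,0,1), (-1,0,0,1), (1,0,0,-1), (-1,0,0,-1),
                      (0,1,1,0), (0,-1,1,0), (0,1,-1,0), (0,-1,-1,0)} \<and>
      f = (\<lambda>(x, y). (a * x + b * y + tx, c * x + d * y + ty)))"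

definition tileable_by_teeth :: "cell set \<Rightarrow> bool" where
  "tileable_by_teeth R \<longleftrightarrow> (\<exists>P. (\<forall>T\<in>P. \<exists>f. grid_iso f \<and> T = f ` tooth_at (0, 0)) \<and>
      (\<forall>T1\<in>P. \<forall>T2\<in>P. T1 \<noteq> T2 \<longrightarrow> T1 \<inter> T2 = {}) \<and> \<Union>P = R)"

definition can_match :: "nat \<Rightarrow> nat \<Rightarrow> nat set \<Rightarrow> bool" where
  "can_match l k S \<longleftrightarrow> (\<exists>f. grid_iso f \<and> f ` rect l = rect l \<and>
      f ` key l k \<subseteq> lock_space l S \<and> tileable_by_teeth (lock_space l S - f ` key l k))"

end

theory Submission
  imports Defs
begin

text \<open>An isometry that maps the rectangle onto itself can only reflect it, horizontally and/or
  vertically. A horizontal reflection sends the key's tooth to the right of the rectangle,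
  where the lock has no cells; a vertical reflection sends row \<open>6k - 2\<close> to row
  \<open>6(l - k) + 1\<close>, which is not of the form \<open>6x - 2\<close>. So the key's tooth
  can only sit in one of the lock's teeth at row \<open>6k - 2\<close>, forcing \<open>k \<in> S\<close>.
  Conversely, for \<open>k \<in> S\<close> the key placed without moving leaves exactly the lock's other
  teeth, which are disjoint translates of the tooth.\<close>

lemma grid_iso_id: "grid_iso id"
  unfolding grid_iso_def by (intro exI[of _ 1] exI[of _ 0]) (auto simp: fun_eq_iff)

lemma grid_iso_translation: "grid_iso (\<lambda>(x, y). (x + tx, y + ty))"
proof -
  have "(\<lambda>(x, y). (x + tx, y + ty)) = (\<lambda>(x, y). (1 * x + 0 * y + tx, 0 * x + 1 * y + ty))"
    by simp
  then show ?thesis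
    unfolding grid_iso_def by blast
qed

lemma tooth_attached_eq_translate:
  "tooth_attached j = (\<lambda>(x, y). (x + (-3), y + j)) ` tooth_at (0, 0)"
  unfolding tooth_attached_def tooth_at_def by (auto simp: image_iff) force+

lemma tooth_attached_disjoint:
  assumes "\<bar>i - j\<bar> > 4"
  shows "tooth_attached i \<inter> tooth_attached j = {}"
  using assms by (auto simp: tooth_attached_def tooth_at_def)

lemma tileable_by_teeth_UN_tooth_attached:
  assumes "\<And>i j. i \<in> J \<Longrightarrow> j \<in> J \<Longrightarrow> i \<noteq> j \<Longrightarrow> \<bar>i - j\<bar> > 4"
  shows "tileable_by_teeth (\<Union>j\<in>J. tooth_attached j)"
  unfolding tileable_by_teeth_def
proof (intro exI[of _ "tooth_attached ` J"] conjI ballI impI)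
  fix T assume "T \<in> tooth_attached ` J"
  then show "\<exists>f. grid_iso f \<and> T = f ` tooth_at (0, 0)"
    using grid_iso_translation tooth_attached_eq_translate by blast
next
  fix T1 T2 assume "T1 \<in> tooth_attached ` J" "T2 \<in> tooth_attached ` J" "T1 \<noteq> T2"
  then show "T1 \<inter> T2 = {}"
    using assms tooth_attached_disjoint by blast
qed simp

lemma lock_space_fst_nonpos: "(x, y) \<in> lock_space l S \<Longrightarrow> x \<le> 0"
  by (auto simp: lock_space_def rect_def tooth_attached_def tooth_at_def)

lemma lock_space_left_of_rect:
  "(-1, y) \<in> lock_space l S \<Longrightarrow> \<exists>x\<in>S. y = 6 * int x - 2"
  by (auto simp: lock_space_def rect_def tooth_attached_def tooth_at_def)

lemma lock_space_diff_key:
  assumes "k \<in> S"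
  shows "lock_space l S - key l k = (\<Union>j\<in>(\<lambda>x. 6 * int x - 2) ` (S - {k}). tooth_attached j)"
proof -
  have "tooth_attached (6 * int x - 2) \<inter> (rect l \<union> tooth_attached (6 * int k - 2)) = {}"
    if "x \<noteq> k" for x
    using that tooth_attached_disjoint[of "6 * int x - 2" "6 * int k - 2"]
    by (auto simp: rect_def tooth_attached_def tooth_at_def)
  then show ?thesis
    using assms by (auto simp: lock_space_def key_def)
qed

lemma grid_iso_rect_cases:
  assumes "grid_iso f" and "f ` rect l = rect l" and "l \<ge> 1"
  obtains s where "s \<in> {1, -1}" and "f = (\<lambda>(x, y). (s * x, y))"
    | s where "s \<in> {1, -1}" and "f = (\<lambda>(x, y). (s * x, 6 * int l - 1 - y))"
proof -
  from assms(1) obtain a b c d tx ty where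
    abcd: "(a, b, c, d) \<in> {(1,0,0,1), (-1,0,0,1), (1,0,0,-1), (-1,0,0,-1),
                      (0,1,1,0), (0,-1,1,0), (0,1,-1,0), (0,-1,-1,0)}"
    and f: "f = (\<lambda>(x, y). (a * x + b * y + tx, c * x + d * y + ty))"
    unfolding grid_iso_def by blast
  have first: "f (0, 1) \<in> rect l" and second: "f (0, 2) \<in> rect l"
    and last: "f (0, 6 * int l - 2) \<in> rect l"
    using assms(2,3) by (auto simp: rect_def)
  from abcd show thesis
  proof (elim insertE emptyE)
    assume "(a, b, c, d) = (1, 0, 0, 1)"
    with first last have "f = (\<lambda>(x, y). (1 * x, y))"
      by (auto simp: f rect_def)
    then show thesis using that(1) by blast
  next
    assume "(a, b, c, d) = (-1, 0, 0, 1)"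
    with first last have "f = (\<lambda>(x, y). (-1 * x, y))"
      by (auto simp: f rect_def)
    then show thesis using that(1) by blast
  next
    assume "(a, b, c, d) = (1, 0, 0, -1)"
    with first last have "f = (\<lambda>(x, y). (1 * x, 6 * int l - 1 - y))"
      by (auto simp: f rect_def)
    then show thesis using that(2) by blast
  next
    assume "(a, b, c, d) = (-1, 0, 0, -1)"
    with first last have "f = (\<lambda>(x, y). (-1 * x, 6 * int l - 1 - y))"
      by (auto simp: f rect_def)
    then show thesis using that(2) by blast
    \<comment> \<open>The remaining four isometries turn the column into a row, so they cannot keep both
      \<open>(0, 1)\<close> and \<open>(0, 2)\<close> inside it.\<close>
  qed (use first second in \<open>auto simp: f rect_def\<close>)
qed

lemma mem_if_can_match:
  assumes "can_match l k S" and "l \<ge> 1"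
  shows "k \<in> S"
proof -
  from assms(1) obtain f where f: "grid_iso f" "f ` rect l = rect l"
    and key_in_lock: "f ` key l k \<subseteq> lock_space l S"
    unfolding can_match_def by blast
  have "(-1, 6 * int k - 2) \<in> key l k"
    by (auto simp: key_def tooth_attached_def tooth_at_def)
  with key_in_lock have tip: "f (-1, 6 * int k - 2) \<in> lock_space l S"
    by blast
  from f assms(2) show ?thesis
  proof (cases rule: grid_iso_rect_cases)
    case (1 s)
    with tip lock_space_fst_nonpos have "s = 1" by fastforce
    with 1 tip lock_space_left_of_rect show ?thesis by fastforce
  next
    case (2 s)
    with tip lock_space_fst_nonpos have "s = 1" by fastforce
    with 2 tip obtain x where "6 * int l - 1 - (6 * int k - 2) = 6 * int x - 2"
      using lock_space_left_of_rect by fastforce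
    then have False by presburger
    then show ?thesis ..
  qed
qed

lemma can_match_if_mem:
  assumes "k \<in> S"
  shows "can_match l k S"
proof -
  have "key l k \<subseteq> lock_space l S"
    using assms by (auto simp: key_def lock_space_def)
  moreover have "tileable_by_teeth (lock_space l S - key l k)"
    unfolding lock_space_diff_key[OF assms]
    by (rule tileable_by_teeth_UN_tooth_attached) auto
  ultimately show ?thesis
    unfolding can_match_def using grid_iso_id by (intro exI[of _ id]) auto
qed

theorem lemma2p2:
  fixes l k :: nat and S :: "nat set"
  assumes "l \<ge> 1" and "1 \<le> k" and "k \<le> l" and "S \<subseteq> {1..l}"
  shows "can_match l k S \<longleftrightarrow> k \<in> S"
  using mem_if_can_match[OF _ assms(1)] can_match_if_mem by blast

end
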